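(* Let $G$ be a connected graph with $n$ vertices and let $l\ge 2$. Let $B_{n\times l}^2$ be a graph obtained from $l$ disjoint copies $G_{n,1},\dots,G_{n,l}$ of $G$ by adding, for each $1\le i\le l-1$, a single edge joining some vertex of $G_{n,i}$ to some vertex of $G_{n,i+1}$. Then $$0 < \lambda_2(B_{n\times l}^2) \le 2.$$
   Context: All graphs are finite, simple and unweighted. For a graph $H$ with adjacency matrix $A$ and diagonal degree matrix $D$, the graph Laplacian is $L_H = D - A$, with eigenvalues ordered $0=\lambda_1 \le \lambda_2 \le \dots$; $\lambda_2(H)$ denotes the second smallest eigenvalue of $L_H$. *)

theory Defs
  imports "Jordan_Normal_Form.Char_Poly" "HOL-Library.Multiset"
begin

definition simple_graph :: "nat \<Rightarrow> (nat \<Rightarrow> nat \<Rightarrow> bool) \<Rightarrow> bool" where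
  "simple_graph n E \<longleftrightarrow> (\<forall>u v. E u v \<longrightarrow> u < n \<and> v < n \<and> u \<noteq> v \<and> E v u)"

definition connected_graph :: "nat \<Rightarrow> (nat \<Rightarrow> nat \<Rightarrow> bool) \<Rightarrow> bool" where
  "connected_graph n E \<longleftrightarrow> n \<ge> 1 \<and> (\<forall>u<n. \<forall>v<n. E\<^sup>*\<^sup>* u v)"

definition laplacian :: "nat \<Rightarrow> (nat \<Rightarrow> nat \<Rightarrow> bool) \<Rightarrow> real mat" where
  "laplacian n E = mat n n (\<lambda>(i, j). if i = j then real (card {k. k < n \<and> E i k})
                                      else if E i j then -1 else 0)"

definition lap_eigenvalues :: "nat \<Rightarrow> (nat \<Rightarrow> nat \<Rightarrow> bool) \<Rightarrow> real list" where
  "lap_eigenvalues n E = sorted_list_of_multiset (proots (char_poly (laplacian n E)))"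

definition lambda2 :: "nat \<Rightarrow> (nat \<Rightarrow> nat \<Rightarrow> bool) \<Rightarrow> real" where
  "lambda2 n E = lap_eigenvalues n E ! 1"

text \<open>The graph B: l disjoint copies of G (copy i occupies vertices i*n + v, v < n),
  plus, for each i with i+1 < l, one edge joining vertex a i of copy i to vertex b i
  of copy i+1.\<close>
definition chain_graph :: "nat \<Rightarrow> (nat \<Rightarrow> nat \<Rightarrow> bool) \<Rightarrow> nat \<Rightarrow> (nat \<Rightarrow> nat) \<Rightarrow> (nat \<Rightarrow> nat)
    \<Rightarrow> nat \<Rightarrow> nat \<Rightarrow> bool" where
  "chain_graph n E l a b x y \<longleftrightarrow> x < l * n \<and> y < l * n \<and>
     ((x div n = y div n \<and> E (x mod n) (y mod n)) \<or>
      (\<exists>i. Suc i < l \<and> ((x = i * n + a i \<and> y = Suc i * n + b i) \<or>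
                          (y = i * n + a i \<and> x = Suc i * n + b i))))"

end

theory Submission
  imports Defs "Jordan_Normal_Form.Schur_Decomposition"
begin

(* The Laplacian L of a graph is symmetric with quadratic form x.Lx = sum over the edges uv of
   (x_u - x_v)^2. So it has an orthonormal eigenbasis (constructed by deflation), it is positive
   semidefinite, and its kernel consists of the vectors that are constant along edges. On the
   connected graph B these are the constant vectors, so 0 is a simple eigenvalue and lambda_2 > 0.
   For the upper bound, only one edge of B leaves the first copy S of G. For every vector u some
   nonzero x = alpha 1_S + beta 1 is orthogonal to u, and x.Lx <= alpha^2 <= 2((alpha+beta)^2 + beta^2)
   <= 2 x.x. If at most one eigenvalue were <= 2, taking for u its eigenvector would expand such an
   x in eigenvectors with eigenvalues > 2, forcing x.Lx > 2 x.x; hence lambda_2 <= 2. *)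

section \<open>Real symmetric matrices\<close>

definition symmetric_mat :: "'a mat \<Rightarrow> bool" where
  "symmetric_mat A \<longleftrightarrow> A\<^sup>T = A"

lemma symmetric_matD:
  assumes "A \<in> carrier_mat n n" "symmetric_mat A" "i < n" "j < n"
  shows "A $$ (i, j) = A $$ (j, i)"
  using assms index_transpose_mat(1)[of j A i] unfolding symmetric_mat_def by simp

lemma symmetric_matI:
  assumes "A \<in> carrier_mat n n" "\<And>i j. i < n \<Longrightarrow> j < n \<Longrightarrow> A $$ (i, j) = A $$ (j, i)"
  shows "symmetric_mat A"
  unfolding symmetric_mat_def using assms by (intro eq_matI) auto

lemma symmetric_mat_scalar_prod:
  fixes A :: "'a::comm_semiring_0 mat"
  assumes "A \<in> carrier_mat n n" "symmetric_mat A" "x \<in> carrier_vec n" "y \<in> carrier_vec n"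
  shows "(A *\<^sub>v x) \<bullet> y = x \<bullet> (A *\<^sub>v y)"
  using transpose_vec_mult_scalar[OF assms(1,4,3)] assms(2) unfolding symmetric_mat_def by simp

lemma scalar_prod_eq_sum: "v \<in> carrier_vec n \<Longrightarrow> u \<bullet> v = (\<Sum>i<n. u $ i * v $ i)"
  by (auto simp: scalar_prod_def atLeast0LessThan)

lemma index_mult_mat_vec_sum:
  "A \<in> carrier_mat n m \<Longrightarrow> v \<in> carrier_vec m \<Longrightarrow> i < n \<Longrightarrow> (A *\<^sub>v v) $ i = (\<Sum>j<m. A $$ (i, j) * v $ j)"
  by (auto simp: mult_mat_vec_def scalar_prod_def atLeast0LessThan)

lemma nonzero_vec_scalar_prod_pos:
  fixes v :: "real vec"
  assumes "v \<in> carrier_vec n" "v \<noteq> 0\<^sub>v n"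
  shows "0 < v \<bullet> v"
proof -
  obtain i where i: "i < n" "v $ i \<noteq> 0"
    using assms by (metis carrier_vecD eq_vecI index_zero_vec)
  have "(v $ i)\<^sup>2 \<le> (\<Sum>j<n. (v $ j)\<^sup>2)"
    using i by (intro member_le_sum) auto
  moreover have "v \<bullet> v = (\<Sum>j<n. (v $ j)\<^sup>2)"
    using scalar_prod_eq_sum[OF assms(1)] by (simp add: power2_eq_square)
  moreover have "0 < (v $ i)\<^sup>2" using i by simp
  ultimately show ?thesis by linarith
qed

lemma symmetric_mat_eigenvalue_real:
  fixes A :: "real mat"
  assumes A: "A \<in> carrier_mat n n" and sym: "symmetric_mat A"
    and ev: "eigenvalue (map_mat complex_of_real A) z"
  shows "z \<in> \<real>"
proof -
  let ?Ac = "map_mat complex_of_real A"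
  from ev obtain v where "eigenvector ?Ac v z" unfolding eigenvalue_def by auto
  then have v: "v \<in> carrier_vec n" and v0: "v \<noteq> 0\<^sub>v n" and Av: "?Ac *\<^sub>v v = z \<cdot>\<^sub>v v"
    using A unfolding eigenvector_def by auto
  define X where "X = (\<Sum>i<n. \<Sum>j<n. cnj (v $ i) * of_real (A $$ (i, j)) * v $ j)"
  define S where "S = (\<Sum>i<n. (cmod (v $ i))\<^sup>2)"
  have "X = (\<Sum>i<n. cnj (v $ i) * (?Ac *\<^sub>v v) $ i)"
    unfolding X_def using A v
    by (auto simp: mult_mat_vec_def scalar_prod_def sum_distrib_left mult.assoc intro!: sum.cong)
  also have "\<dots> = z * (\<Sum>i<n. cnj (v $ i) * v $ i)"
    using Av v by (auto simp: sum_distrib_left intro!: sum.cong)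
  also have "(\<Sum>i<n. cnj (v $ i) * v $ i) = of_real S"
    unfolding S_def of_real_sum
    by (intro sum.cong refl) (metis complex_norm_square mult.commute)
  finally have X: "X = z * of_real S" .
  \<comment> \<open>The Hermitian form \<open>X = v\<^sup>* A v\<close> is real because \<open>A\<close> is real symmetric.\<close>
  have "cnj X = (\<Sum>i<n. \<Sum>j<n. v $ i * of_real (A $$ (i, j)) * cnj (v $ j))"
    unfolding X_def by simp
  also have "\<dots> = (\<Sum>j<n. \<Sum>i<n. v $ i * of_real (A $$ (i, j)) * cnj (v $ j))"
    by (rule sum.swap)
  also have "\<dots> = X"
    unfolding X_def using symmetric_matD[OF A sym]
    by (intro sum.cong refl) (auto simp: mult.commute mult.left_commute)
  finally have "cnj X = X" .
  moreover have "S > 0"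
  proof -
    obtain i where i: "i < n" "v $ i \<noteq> 0"
      using v v0 by (metis carrier_vecD eq_vecI index_zero_vec)
    have "(cmod (v $ i))\<^sup>2 \<le> S"
      unfolding S_def using i by (intro member_le_sum) auto
    moreover have "0 < (cmod (v $ i))\<^sup>2" using i by simp
    ultimately show ?thesis by linarith
  qed
  ultimately have "cnj z * of_real S = z * of_real S" "S \<noteq> 0"
    using X by (metis complex_cnj_complex_of_real complex_cnj_mult, simp)
  then have "cnj z = z" by simp
  then show ?thesis using Reals_cnj_iff by blast
qed

lemma symmetric_mat_char_poly_splits:
  fixes A :: "real mat"
  assumes A: "A \<in> carrier_mat n n" and sym: "symmetric_mat A"
  obtains es where "char_poly A = (\<Prod>e\<leftarrow>es. [:-e, 1:])" and "length es = n"
proof -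
  let ?Ac = "map_mat complex_of_real A"
  have Ac: "?Ac \<in> carrier_mat n n" using A by auto
  obtain zs where cp: "char_poly ?Ac = (\<Prod>z\<leftarrow>zs. [:-z, 1:])" and len: "length zs = n"
    using char_poly_factorized[OF Ac] by blast
  have real: "z \<in> \<real>" if "z \<in> set zs" for z
  proof (rule symmetric_mat_eigenvalue_real[OF A sym])
    show "eigenvalue ?Ac z"
      unfolding eigenvalue_root_char_poly[OF Ac] cp using linear_poly_root[OF that] .
  qed
  interpret of_real_poly: map_poly_inj_comm_ring_hom complex_of_real ..
  have "map_poly complex_of_real (\<Prod>e\<leftarrow>map Re zs. [:-e, 1:])
      = (\<Prod>e\<leftarrow>map Re zs. map_poly complex_of_real [:-e, 1:])"
    unfolding of_real_poly.hom_prod_list map_map o_def ..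
  also have "\<dots> = (\<Prod>z\<leftarrow>zs. [:-z, 1:])"
    using real by (induction zs) (auto simp: complex_is_Real_iff complex_eq_iff)
  also have "\<dots> = map_poly complex_of_real (char_poly A)"
    unfolding cp[symmetric] by (rule of_real_hom.char_poly_hom[OF A])
  finally have "char_poly A = (\<Prod>e\<leftarrow>map Re zs. [:-e, 1:])"
    by (rule of_real_poly.injectivity[symmetric])
  then show ?thesis using that[of "map Re zs"] len by simp
qed

definition mat_trace :: "'a::comm_ring_1 mat \<Rightarrow> 'a" where
  "mat_trace A = (\<Sum>i<dim_row A. A $$ (i, i))"

lemma mat_trace_mult_comm:
  fixes A B :: "'a::comm_ring_1 mat"
  assumes A: "A \<in> carrier_mat n m" and B: "B \<in> carrier_mat m n"
  shows "mat_trace (A * B) = mat_trace (B * A)"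
proof -
  have "mat_trace (A * B) = (\<Sum>i<n. \<Sum>k<m. A $$ (i, k) * B $$ (k, i))"
    unfolding mat_trace_def using A B
    by (auto simp: scalar_prod_def atLeast0LessThan intro!: sum.cong)
  also have "\<dots> = (\<Sum>k<m. \<Sum>i<n. B $$ (k, i) * A $$ (i, k))"
    by (subst sum.swap) (simp add: mult.commute)
  also have "\<dots> = mat_trace (B * A)"
    unfolding mat_trace_def using A B
    by (auto simp: scalar_prod_def atLeast0LessThan intro!: sum.cong)
  finally show ?thesis .
qed

lemma mat_trace_eq_sum_eigenvalues:
  fixes A :: "real mat"
  assumes A: "A \<in> carrier_mat n n" and cp: "char_poly A = (\<Prod>e\<leftarrow>es. [:-e, 1:])"
  shows "mat_trace A = sum_list es"
proof -
  obtain B P Q where "schur_decomposition A es = (B, P, Q)"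
    by (cases "schur_decomposition A es") auto
  from schur_decomposition[OF A cp this]
  have sim: "similar_mat_wit A B P Q" and diag: "diag_mat B = es" by auto
  from sim A have B: "B \<in> carrier_mat n n" and P: "P \<in> carrier_mat n n" and Q: "Q \<in> carrier_mat n n"
    and QP: "Q * P = 1\<^sub>m n" and AB: "A = P * B * Q"
    unfolding similar_mat_wit_def Let_def by auto
  have "mat_trace A = mat_trace (Q * (P * B))"
    unfolding AB using P B Q by (intro mat_trace_mult_comm[of _ n n]) auto
  also have "Q * (P * B) = (Q * P) * B"
    using P B Q by simp
  also have "\<dots> = B"
    using QP B by simp
  also have "mat_trace B = sum_list es"
    unfolding diag[symmetric] mat_trace_def diag_mat_def
    using B by (simp add: sum_list_sum_nth atLeast0LessThan)
  finally show ?thesis .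
qed

section \<open>Orthonormal eigenbases by deflation\<close>

definition orthonormal_eigensystem :: "real mat \<Rightarrow> nat \<Rightarrow> real vec list \<Rightarrow> real list \<Rightarrow> bool" where
  "orthonormal_eigensystem A n us ds \<longleftrightarrow> length ds = length us \<and> set us \<subseteq> carrier_vec n
     \<and> (\<forall>s<length us. \<forall>t<length us. us ! s \<bullet> us ! t = (if s = t then 1 else 0))
     \<and> (\<forall>t<length us. A *\<^sub>v us ! t = ds ! t \<cdot>\<^sub>v us ! t)"

lemma orthonormal_eigensystemD:
  assumes "orthonormal_eigensystem A n us ds"
  shows "length ds = length us"
    and "t < length us \<Longrightarrow> us ! t \<in> carrier_vec n"
    and "s < length us \<Longrightarrow> t < length us \<Longrightarrow> us ! s \<bullet> us ! t = (if s = t then 1 else 0)"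
    and "t < length us \<Longrightarrow> A *\<^sub>v us ! t = ds ! t \<cdot>\<^sub>v us ! t"
  using assms unfolding orthonormal_eigensystem_def by auto

lemma orthonormal_eigensystem_snoc:
  assumes sys: "orthonormal_eigensystem A n us ds" and v: "v \<in> carrier_vec n" and "v \<bullet> v = 1"
    and orth: "\<And>t. t < length us \<Longrightarrow> us ! t \<bullet> v = 0" and "A *\<^sub>v v = \<mu> \<cdot>\<^sub>v v"
  shows "orthonormal_eigensystem A n (us @ [v]) (ds @ [\<mu>])"
proof -
  note sysD = orthonormal_eigensystemD[OF sys]
  have "v \<bullet> us ! t = 0" if "t < length us" for t
    using orth[OF that] comm_scalar_prod[OF v sysD(2)[OF that]] by simp
  then show ?thesis
    using sys assms unfolding orthonormal_eigensystem_def
    by (auto simp: nth_append less_Suc_eq)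
qed

text \<open>Deflation replaces the eigenvalues \<open>ds\<close> of the orthonormal eigenvectors \<open>us\<close> by \<open>c\<close>;
  on the orthogonal complement of \<open>us\<close> it acts like \<open>A\<close>.\<close>
definition deflate :: "real mat \<Rightarrow> real vec list \<Rightarrow> real list \<Rightarrow> real \<Rightarrow> real mat" where
  "deflate A us ds c = mat (dim_row A) (dim_col A)
     (\<lambda>(i, j). A $$ (i, j) + (\<Sum>t<length us. (c - ds ! t) * (us ! t $ i * us ! t $ j)))"

context
  fixes A :: "real mat" and n :: nat and us :: "real vec list" and ds :: "real list" and c :: real
  assumes A: "A \<in> carrier_mat n n" and sys: "orthonormal_eigensystem A n us ds"
begin

private lemmas sysD = orthonormal_eigensystemD[OF sys]

lemma deflate_carrier: "deflate A us ds c \<in> carrier_mat n n"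
  using A unfolding deflate_def by simp

lemma symmetric_mat_deflate: "symmetric_mat A \<Longrightarrow> symmetric_mat (deflate A us ds c)"
  using A by (intro symmetric_matI[OF deflate_carrier])
    (auto simp: deflate_def symmetric_matD mult.commute)

lemma mat_trace_deflate: "mat_trace (deflate A us ds c) = mat_trace A + (\<Sum>t<length us. c - ds ! t)"
proof -
  have "mat_trace (deflate A us ds c)
      = mat_trace A + (\<Sum>i<n. \<Sum>t<length us. (c - ds ! t) * (us ! t $ i * us ! t $ i))"
    using A unfolding mat_trace_def deflate_def by (simp add: sum.distrib)
  also have "(\<Sum>i<n. \<Sum>t<length us. (c - ds ! t) * (us ! t $ i * us ! t $ i))
      = (\<Sum>t<length us. (c - ds ! t) * (us ! t \<bullet> us ! t))"
    by (subst sum.swap) (simp add: sum_distrib_left scalar_prod_eq_sum[OF sysD(2)])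
  finally show ?thesis by (simp add: sysD(3))
qed

lemma deflate_mult_vec_index:
  assumes w: "w \<in> carrier_vec n" and i: "i < n"
  shows "(deflate A us ds c *\<^sub>v w) $ i
    = (A *\<^sub>v w) $ i + (\<Sum>t<length us. (c - ds ! t) * (us ! t \<bullet> w) * us ! t $ i)"
proof -
  have "(deflate A us ds c *\<^sub>v w) $ i
      = (\<Sum>j<n. A $$ (i, j) * w $ j + (\<Sum>t<length us. (c - ds ! t) * us ! t $ i * (us ! t $ j * w $ j)))"
    unfolding index_mult_mat_vec_sum[OF deflate_carrier w i] using A i
    by (intro sum.cong refl) (simp add: deflate_def algebra_simps sum_distrib_left sum_distrib_right)
  also have "\<dots> = (A *\<^sub>v w) $ i
      + (\<Sum>j<n. \<Sum>t<length us. (c - ds ! t) * us ! t $ i * (us ! t $ j * w $ j))"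
    by (simp add: sum.distrib index_mult_mat_vec_sum[OF A w i])
  also have "(\<Sum>j<n. \<Sum>t<length us. (c - ds ! t) * us ! t $ i * (us ! t $ j * w $ j))
      = (\<Sum>t<length us. (c - ds ! t) * (us ! t \<bullet> w) * us ! t $ i)"
    by (subst sum.swap) (simp add: scalar_prod_eq_sum[OF w] sum_distrib_left mult_ac)
  finally show ?thesis .
qed

lemma deflate_mult_eigenvector:
  assumes s: "s < length us"
  shows "deflate A us ds c *\<^sub>v us ! s = c \<cdot>\<^sub>v us ! s"
proof (rule eq_vecI)
  have us: "us ! s \<in> carrier_vec n" by (rule sysD(2)[OF s])
  fix i assume "i < dim_vec (c \<cdot>\<^sub>v us ! s)"
  then have i: "i < n" using us by simp
  have "(\<Sum>t<length us. (c - ds ! t) * (us ! t \<bullet> us ! s) * us ! t $ i)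
      = (\<Sum>t<length us. if t = s then (c - ds ! s) * us ! s $ i else 0)"
    using s by (intro sum.cong refl) (simp add: sysD(3))
  also have "\<dots> = (c - ds ! s) * us ! s $ i"
    using s by simp
  finally have "(\<Sum>t<length us. (c - ds ! t) * (us ! t \<bullet> us ! s) * us ! t $ i) = (c - ds ! s) * us ! s $ i" .
  moreover have "(A *\<^sub>v us ! s) $ i = ds ! s * us ! s $ i"
    using sysD(4)[OF s] us i by simp
  ultimately show "(deflate A us ds c *\<^sub>v us ! s) $ i = (c \<cdot>\<^sub>v us ! s) $ i"
    using deflate_mult_vec_index[OF us i] us i by (simp add: algebra_simps)
qed (use deflate_carrier sysD(2)[OF assms] in simp)

lemma deflate_eigenvector:
  assumes sym: "symmetric_mat A" and w: "w \<in> carrier_vec n"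
    and Mw: "deflate A us ds c *\<^sub>v w = \<mu> \<cdot>\<^sub>v w" and "\<mu> \<noteq> c"
  shows "\<forall>t<length us. us ! t \<bullet> w = 0" and "A *\<^sub>v w = \<mu> \<cdot>\<^sub>v w"
proof -
  let ?M = "deflate A us ds c"
  have orth: "us ! s \<bullet> w = 0" if s: "s < length us" for s
  proof -
    have us: "us ! s \<in> carrier_vec n" by (rule sysD(2)[OF s])
    have "c * (us ! s \<bullet> w) = (?M *\<^sub>v us ! s) \<bullet> w"
      using deflate_mult_eigenvector[OF s] us w by simp
    also have "\<dots> = us ! s \<bullet> (?M *\<^sub>v w)"
      by (rule symmetric_mat_scalar_prod[OF deflate_carrier symmetric_mat_deflate[OF sym] us w])
    also have "\<dots> = \<mu> * (us ! s \<bullet> w)"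
      using Mw us w by simp
    finally show ?thesis using \<open>\<mu> \<noteq> c\<close> by simp
  qed
  then show "\<forall>t<length us. us ! t \<bullet> w = 0" by blast
  show "A *\<^sub>v w = \<mu> \<cdot>\<^sub>v w"
  proof (rule eq_vecI)
    fix i assume "i < dim_vec (\<mu> \<cdot>\<^sub>v w)"
    then have i: "i < n" using w by simp
    have "(A *\<^sub>v w) $ i = (?M *\<^sub>v w) $ i"
      using deflate_mult_vec_index[OF w i] orth by simp
    then show "(A *\<^sub>v w) $ i = (\<mu> \<cdot>\<^sub>v w) $ i" using Mw by simp
  qed (use A w in simp)
qed

end

text \<open>If all \<open>n\<close> eigenvalues were equal to \<open>c\<close>, the trace would be \<open>n c\<close>.\<close>
lemma symmetric_mat_eigenvector_ne:
  fixes M :: "real mat"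
  assumes M: "M \<in> carrier_mat n n" and "symmetric_mat M" and "mat_trace M \<noteq> real n * c"
  obtains w \<mu> where "eigenvector M w \<mu>" and "\<mu> \<noteq> c"
proof -
  obtain es where cp: "char_poly M = (\<Prod>e\<leftarrow>es. [:-e, 1:])" and len: "length es = n"
    using symmetric_mat_char_poly_splits[OF assms(1,2)] .
  have "\<exists>\<mu>\<in>set es. \<mu> \<noteq> c"
  proof (rule ccontr)
    assume "\<not> ?thesis"
    then have "es = replicate n c" using len by (metis replicate_eqI)
    then show False
      using mat_trace_eq_sum_eigenvalues[OF M cp] assms(3) by (simp add: sum_list_replicate)
  qed
  then obtain \<mu> where "\<mu> \<in> set es" "\<mu> \<noteq> c" by blast
  moreover have "eigenvalue M \<mu>"
    unfolding eigenvalue_root_char_poly[OF M] cp by (rule linear_poly_root[OF \<open>\<mu> \<in> set es\<close>])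
  ultimately show ?thesis using that unfolding eigenvalue_def by blast
qed

lemma orthonormal_eigensystem_extend:
  fixes A :: "real mat"
  assumes A: "A \<in> carrier_mat n n" and sym: "symmetric_mat A"
    and sys: "orthonormal_eigensystem A n us ds" and k: "length us < n"
  obtains v \<mu> where "orthonormal_eigensystem A n (us @ [v]) (ds @ [\<mu>])"
proof -
  let ?k = "length us"
  \<comment> \<open>This choice makes the trace of the deflated matrix differ from \<open>n c\<close>.\<close>
  define c where "c = (mat_trace A - sum_list ds) / real (n - ?k) + 1"
  let ?M = "deflate A us ds c"
  have "sum_list ds = (\<Sum>t<?k. ds ! t)"
    using orthonormal_eigensystemD(1)[OF sys] by (simp add: sum_list_sum_nth atLeast0LessThan)
  then have "mat_trace ?M = mat_trace A - sum_list ds + real ?k * c"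
    using mat_trace_deflate[OF A sys] by (simp add: sum_subtractf)
  moreover have "real (n - ?k) * c = mat_trace A - sum_list ds + real (n - ?k)"
    using k unfolding c_def by (simp add: field_simps)
  ultimately have "mat_trace ?M \<noteq> real n * c"
    using k by (simp add: algebra_simps)
  then obtain w \<mu> where "eigenvector ?M w \<mu>" and "\<mu> \<noteq> c"
    using symmetric_mat_eigenvector_ne[OF deflate_carrier[OF A sys] symmetric_mat_deflate[OF A sys sym]]
    by blast
  moreover have "dim_row ?M = n" using A by (simp add: deflate_def)
  ultimately have w: "w \<in> carrier_vec n" "w \<noteq> 0\<^sub>v n" and Mw: "?M *\<^sub>v w = \<mu> \<cdot>\<^sub>v w"
    unfolding eigenvector_def by auto
  note w_props = deflate_eigenvector[OF A sys sym w(1) Mw \<open>\<mu> \<noteq> c\<close>]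
  define v where "v = (1 / sqrt (w \<bullet> w)) \<cdot>\<^sub>v w"
  have ww: "0 < w \<bullet> w" by (rule nonzero_vec_scalar_prod_pos[OF w])
  have v: "v \<in> carrier_vec n" using w unfolding v_def by simp
  moreover have "v \<bullet> v = 1"
    using w ww unfolding v_def by (simp add: field_simps)
  moreover have "us ! t \<bullet> v = 0" if "t < ?k" for t
    using w_props(1) that w orthonormal_eigensystemD(2)[OF sys that] unfolding v_def by simp
  moreover have "A *\<^sub>v v = \<mu> \<cdot>\<^sub>v v"
    using A w w_props(2) unfolding v_def by (simp add: mult_mat_vec smult_smult_assoc mult.commute)
  ultimately show ?thesis
    using orthonormal_eigensystem_snoc[OF sys] that by blast
qed

lemma orthonormal_eigenbasis_exists:
  fixes A :: "real mat"
  assumes A: "A \<in> carrier_mat n n" and sym: "symmetric_mat A"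
  obtains us ds where "orthonormal_eigensystem A n us ds" and "length us = n"
proof -
  have "\<exists>us ds. orthonormal_eigensystem A n us ds \<and> length us = k" if "k \<le> n" for k
    using that
  proof (induction k)
    case 0
    show ?case by (auto simp: orthonormal_eigensystem_def)
  next
    case (Suc k)
    then obtain us ds where "orthonormal_eigensystem A n us ds" "length us = k" by auto
    with orthonormal_eigensystem_extend[OF A sym] Suc.prems show ?case
      by (metis Suc_le_lessD length_append_singleton)
  qed
  then show ?thesis using that by blast
qed

context
  fixes A :: "real mat" and n :: nat and us :: "real vec list" and ds :: "real list"
  assumes A: "A \<in> carrier_mat n n" and sys: "orthonormal_eigensystem A n us ds" and len: "length us = n"
begin

private lemmas basisD = orthonormal_eigensystemD[OF sys, unfolded len]

private abbreviation U :: "real mat" where "U \<equiv> mat_of_cols n us"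

private lemma U_carrier: "U \<in> carrier_mat n n" and Ut_carrier: "U\<^sup>T \<in> carrier_mat n n"
  using len by auto

private lemma col_U: "t < n \<Longrightarrow> col U t = us ! t"
  using len basisD(2) by simp

private lemma transpose_U_mult_vec_index: "t < n \<Longrightarrow> (U\<^sup>T *\<^sub>v y) $ t = us ! t \<bullet> y"
  using len by (simp add: col_U)

private lemma transpose_U_mult_U: "U\<^sup>T * U = 1\<^sub>m n"
  using U_carrier by (intro eq_matI) (auto simp: col_U basisD(3))

private lemma U_mult_transpose_U: "U * U\<^sup>T = 1\<^sub>m n"
  by (rule mat_mult_left_right_inverse[OF Ut_carrier U_carrier transpose_U_mult_U])

lemma orthonormal_eigenbasis_parseval:
  assumes x: "x \<in> carrier_vec n" and z: "z \<in> carrier_vec n"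
  shows "x \<bullet> z = (\<Sum>t<n. (us ! t \<bullet> x) * (us ! t \<bullet> z))"
proof -
  have "U *\<^sub>v (U\<^sup>T *\<^sub>v x) = x"
    using U_carrier x by (simp add: assoc_mult_mat_vec[symmetric, of _ n n _ n] U_mult_transpose_U)
  then have "x \<bullet> z = (U *\<^sub>v (U\<^sup>T *\<^sub>v x)) \<bullet> z" by simp
  also have "\<dots> = (U\<^sup>T *\<^sub>v x) \<bullet> (U\<^sup>T *\<^sub>v z)"
    using transpose_vec_mult_scalar[OF Ut_carrier z, of "U\<^sup>T *\<^sub>v x"] Ut_carrier x by simp
  also have "\<dots> = (\<Sum>t<n. (us ! t \<bullet> x) * (us ! t \<bullet> z))"
    using Ut_carrier z by (simp add: scalar_prod_eq_sum[of "U\<^sup>T *\<^sub>v z" n] transpose_U_mult_vec_index)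
  finally show ?thesis .
qed

lemma orthonormal_eigenbasis_char_poly: "char_poly A = (\<Prod>d\<leftarrow>ds. [:-d, 1:])"
proof -
  define D where "D = mat n n (\<lambda>(i, j). if i = j then ds ! i else 0)"
  have D: "D \<in> carrier_mat n n" unfolding D_def by simp
  have "A * U = U * D"
  proof (rule eq_matI)
    fix i j assume "i < dim_row (U * D)" "j < dim_col (U * D)"
    then have ij: "i < n" "j < n" using U_carrier D by auto
    have "(A * U) $$ (i, j) = (A *\<^sub>v us ! j) $ i"
      using A ij len by (simp add: col_U)
    also have "\<dots> = ds ! j * us ! j $ i"
      using basisD(2,4)[OF ij(2)] ij by simp
    also have "\<dots> = (U * D) $$ (i, j)"
    proof -
      have "(U * D) $$ (i, j) = (\<Sum>r<n. us ! r $ i * (if r = j then ds ! r else 0))"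
        using ij len unfolding D_def
        by (auto simp: scalar_prod_def atLeast0LessThan mat_of_cols_def intro!: sum.cong)
      also have "\<dots> = (\<Sum>r<n. if r = j then us ! j $ i * ds ! j else 0)"
        by (intro sum.cong) auto
      finally show ?thesis using ij by simp
    qed
    finally show "(A * U) $$ (i, j) = (U * D) $$ (i, j)" .
  qed (use A U_carrier D in auto)
  have "A = A * (U * U\<^sup>T)"
    using A by (simp add: U_mult_transpose_U)
  also have "\<dots> = A * U * U\<^sup>T"
    by (rule assoc_mult_mat[OF A U_carrier Ut_carrier, symmetric])
  also have "\<dots> = U * D * U\<^sup>T"
    unfolding \<open>A * U = U * D\<close> ..
  finally have "A = U * D * U\<^sup>T" .
  then have "similar_mat A D"
    using A D U_carrier Ut_carrier U_mult_transpose_U transpose_U_mult_U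
    by (intro similar_matI[of A D U "U\<^sup>T" n]) auto
  then have "char_poly A = char_poly D" by (rule char_poly_similar)
  also have "\<dots> = (\<Prod>d\<leftarrow>diag_mat D. [:-d, 1:])"
    by (rule char_poly_upper_triangular[OF D]) (simp add: upper_triangular_def D_def)
  also have "diag_mat D = ds"
    using basisD(1) unfolding diag_mat_def D_def by (simp add: list_eq_iff_nth_eq)
  finally show ?thesis .
qed

lemma orthonormal_eigenbasis_quadratic_form:
  assumes sym: "symmetric_mat A" and x: "x \<in> carrier_vec n"
  shows "x \<bullet> (A *\<^sub>v x) = (\<Sum>t<n. ds ! t * (us ! t \<bullet> x)\<^sup>2)"
proof -
  have "us ! t \<bullet> (A *\<^sub>v x) = ds ! t * (us ! t \<bullet> x)" if "t < n" for t
    using symmetric_mat_scalar_prod[OF A sym basisD(2)[OF that] x] basisD(2,4)[OF that] x by simp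
  then show ?thesis
    using orthonormal_eigenbasis_parseval[OF x, of "A *\<^sub>v x"] A x
    by (simp add: power2_eq_square mult_ac)
qed

lemma orthonormal_eigenbasis_rayleigh_gt:
  assumes sym: "symmetric_mat A" and x: "x \<in> carrier_vec n" "x \<noteq> 0\<^sub>v n"
    and orth: "us ! r \<bullet> x = 0" and large: "\<And>t. t < n \<Longrightarrow> t \<noteq> r \<Longrightarrow> c < ds ! t"
  shows "c * (x \<bullet> x) < x \<bullet> (A *\<^sub>v x)"
proof -
  have xx: "x \<bullet> x = (\<Sum>t<n. (us ! t \<bullet> x)\<^sup>2)"
    using orthonormal_eigenbasis_parseval[OF x(1) x(1)] by (simp add: power2_eq_square)
  have "\<exists>t<n. us ! t \<bullet> x \<noteq> 0"
  proof (rule ccontr)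
    assume "\<not> ?thesis"
    then have "x \<bullet> x = 0" unfolding xx by simp
    then show False using nonzero_vec_scalar_prod_pos[OF x] by simp
  qed
  then obtain t where t: "t < n" "us ! t \<bullet> x \<noteq> 0" by blast
  have "0 < (\<Sum>t<n. (ds ! t - c) * (us ! t \<bullet> x)\<^sup>2)"
  proof (rule sum_pos2)
    show "0 < (ds ! t - c) * (us ! t \<bullet> x)\<^sup>2"
      using t large[of t] orth by (cases "t = r") auto
    show "0 \<le> (ds ! s - c) * (us ! s \<bullet> x)\<^sup>2" if "s \<in> {..<n}" for s
      using that large[of s] orth by (cases "s = r") auto
  qed (use t in auto)
  also have "\<dots> = x \<bullet> (A *\<^sub>v x) - c * (x \<bullet> x)"
    using orthonormal_eigenbasis_quadratic_form[OF sym x(1)] xx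
    by (simp add: algebra_simps sum_subtractf sum_distrib_left)
  finally show ?thesis by simp
qed

end

section \<open>The second smallest eigenvalue\<close>

lemma proots_prod_linear_factors: "proots (\<Prod>d\<leftarrow>ds. [:-d, 1:]) = mset (ds :: 'a::idom list)"
proof (induction ds)
  case (Cons d ds)
  have "proots (\<Prod>e\<leftarrow>d # ds. [:-e, 1:]) = proots [:-d, 1:] + proots (\<Prod>e\<leftarrow>ds. [:-e, 1:])"
    by (simp only: list.map prod_list.Cons) (rule proots_mult; auto)
  then show ?case using Cons.IH proots_linear_factor[of "-d"] by simp
qed simp

lemma sort_nth_1_gt_iff:
  fixes xs :: "'a::linorder list"
  assumes len: "2 \<le> length xs"
  shows "c < sort xs ! 1 \<longleftrightarrow> (\<forall>i<length xs. \<forall>j<length xs. xs ! i \<le> c \<longrightarrow> xs ! j \<le> c \<longrightarrow> i = j)"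
proof -
  let ?ys = "sort xs"
  let ?I = "\<lambda>zs. {i. i < length zs \<and> zs ! i \<le> c}"
  have "length (filter (\<lambda>x. x \<le> c) ?ys) = length (filter (\<lambda>x. x \<le> c) xs)"
    by (metis mset_filter mset_sort size_mset)
  then have "card (?I ?ys) = card (?I xs)"
    by (simp add: length_filter_conv_card)
  moreover have "c < ?ys ! 1 \<longleftrightarrow> card (?I ?ys) \<le> 1"
  proof
    assume gt: "c < ?ys ! 1"
    have "i = 0" if "i < length ?ys" "?ys ! i \<le> c" for i
    proof (rule ccontr)
      assume "i \<noteq> 0"
      then have "?ys ! 1 \<le> ?ys ! i" using sorted_nth_mono[OF sorted_sort, of 1 i] that(1) by simp
      then show False using that(2) gt by simp
    qed
    then have sub: "?I ?ys \<subseteq> {0}" by blast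
    show "card (?I ?ys) \<le> 1" using card_mono[OF _ sub] by simp
  next
    assume card: "card (?I ?ys) \<le> 1"
    show "c < ?ys ! 1"
    proof (rule ccontr)
      assume "\<not> c < ?ys ! 1"
      then have "{0, 1} \<subseteq> ?I ?ys"
        using sorted_nth_mono[OF sorted_sort, of 0 1 xs] len by auto
      from card_mono[OF _ this] card show False by simp
    qed
  qed
  ultimately show ?thesis
    by (simp add: card_le_Suc0_iff_eq) blast
qed

lemma symmetric_mat_second_eigenvalue_pos:
  fixes A :: "real mat"
  assumes A: "A \<in> carrier_mat n n" and sym: "symmetric_mat A" and n: "2 \<le> n"
    and psd: "\<And>x. x \<in> carrier_vec n \<Longrightarrow> 0 \<le> x \<bullet> (A *\<^sub>v x)"
    and kernel: "\<And>x. x \<in> carrier_vec n \<Longrightarrow> A *\<^sub>v x = 0\<^sub>v n \<Longrightarrow> \<exists>a. x = a \<cdot>\<^sub>v z"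
  shows "0 < sorted_list_of_multiset (proots (char_poly A)) ! 1"
proof -
  obtain us ds where sys: "orthonormal_eigensystem A n us ds" and len: "length us = n"
    using orthonormal_eigenbasis_exists[OF A sym] .
  note sysD = orthonormal_eigensystemD[OF sys, unfolded len]
  have kernel_basis: "A *\<^sub>v us ! t = 0\<^sub>v n" if t: "t < n" "ds ! t \<le> 0" for t
  proof -
    have "ds ! t = us ! t \<bullet> (A *\<^sub>v us ! t)"
      using sysD(2,4)[OF t(1)] sysD(3)[OF t(1) t(1)] by simp
    then have "ds ! t = 0" using psd[OF sysD(2)[OF t(1)]] t(2) by simp
    then show ?thesis using sysD(2,4)[OF t(1)] by auto
  qed
  have "s = t" if st: "s < n" "t < n" "ds ! s \<le> 0" "ds ! t \<le> 0" for s t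
  proof (rule ccontr)
    assume s_ne_t: "s \<noteq> t"
    obtain a where a: "us ! s = a \<cdot>\<^sub>v z"
      using kernel[OF sysD(2)[OF st(1)] kernel_basis[OF st(1,3)]] by blast
    obtain b where b: "us ! t = b \<cdot>\<^sub>v z"
      using kernel[OF sysD(2)[OF st(2)] kernel_basis[OF st(2,4)]] by blast
    have "a * a * (z \<bullet> z) = 1" "b * b * (z \<bullet> z) = 1" "a * b * (z \<bullet> z) = 0"
      using sysD(3)[of s s] sysD(3)[of t t] sysD(3)[of s t] st s_ne_t a b by (simp_all add: mult_ac)
    then show False by auto
  qed
  then show ?thesis
    unfolding orthonormal_eigenbasis_char_poly[OF A sys len] proots_prod_linear_factors
    using sort_nth_1_gt_iff[of ds 0] sysD(1) n by simp
qed

lemma symmetric_mat_second_eigenvalue_le: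
  fixes A :: "real mat"
  assumes A: "A \<in> carrier_mat n n" and sym: "symmetric_mat A" and n: "2 \<le> n"
    and test: "\<And>u. u \<in> carrier_vec n \<Longrightarrow>
      \<exists>x\<in>carrier_vec n. x \<noteq> 0\<^sub>v n \<and> u \<bullet> x = 0 \<and> x \<bullet> (A *\<^sub>v x) \<le> c * (x \<bullet> x)"
  shows "sorted_list_of_multiset (proots (char_poly A)) ! 1 \<le> c"
proof (rule ccontr)
  assume gt: "\<not> ?thesis"
  obtain us ds where sys: "orthonormal_eigensystem A n us ds" and len: "length us = n"
    using orthonormal_eigenbasis_exists[OF A sym] .
  note sysD = orthonormal_eigensystemD[OF sys, unfolded len]
  have unique: "s = t" if "s < n" "t < n" "ds ! s \<le> c" "ds ! t \<le> c" for s t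
    using gt sort_nth_1_gt_iff[of ds c] sysD(1) n that
    unfolding orthonormal_eigenbasis_char_poly[OF A sys len] proots_prod_linear_factors by auto
  obtain r where r: "r < n" and large: "\<And>t. t < n \<Longrightarrow> t \<noteq> r \<Longrightarrow> c < ds ! t"
  proof (cases "\<exists>r<n. ds ! r \<le> c")
    case True
    then obtain r where r: "r < n" "ds ! r \<le> c" by blast
    show ?thesis
    proof (rule that[OF r(1)])
      fix t assume "t < n" "t \<noteq> r"
      then show "c < ds ! t" using unique[of t r] r by (cases "ds ! t \<le> c") auto
    qed
  next
    case False
    then show ?thesis using that[of 0] n by (auto simp: not_le)
  qed
  \<comment> \<open>A test vector orthogonal to the only eigenvector whose eigenvalue may be at most \<open>c\<close>.\<close>
  obtain x where x: "x \<in> carrier_vec n" "x \<noteq> 0\<^sub>v n" and orth: "us ! r \<bullet> x = 0"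
    and bound: "x \<bullet> (A *\<^sub>v x) \<le> c * (x \<bullet> x)"
    using test[OF sysD(2)[OF r]] by blast
  then show False
    using orthonormal_eigenbasis_rayleigh_gt[OF A sys len sym x orth large] by linarith
qed

section \<open>Graph Laplacians\<close>

lemma simple_graphD:
  assumes "simple_graph N F" "F u v"
  shows "u < N" "v < N" "u \<noteq> v" "F v u"
  using assms unfolding simple_graph_def by auto

lemma laplacian_carrier: "laplacian N F \<in> carrier_mat N N"
  unfolding laplacian_def by simp

lemma symmetric_mat_laplacian: "simple_graph N F \<Longrightarrow> symmetric_mat (laplacian N F)"
  by (rule symmetric_matI[OF laplacian_carrier]) (auto simp: laplacian_def dest: simple_graphD(4))

lemma laplacian_mult_vec_index:
  assumes G: "simple_graph N F" and x: "x \<in> carrier_vec N" and i: "i < N"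
  shows "(laplacian N F *\<^sub>v x) $ i = (\<Sum>j<N. if F i j then x $ i - x $ j else 0)"
proof -
  have deg: "real (card {k. k < N \<and> F i k}) = (\<Sum>j<N. if F i j then 1 else 0)"
    by (simp add: sum.If_cases Int_def conj_commute)
  have "laplacian N F $$ (i, j) * x $ j
      = (if j = i then real (card {k. k < N \<and> F i k}) * x $ i else 0) - (if F i j then x $ j else 0)"
    if "j < N" for j
    using i that simple_graphD(3)[OF G, of i i] unfolding laplacian_def by auto
  then have "(laplacian N F *\<^sub>v x) $ i
      = real (card {k. k < N \<and> F i k}) * x $ i - (\<Sum>j<N. if F i j then x $ j else 0)"
    using i by (simp add: index_mult_mat_vec_sum[OF laplacian_carrier x i] sum_subtractf)
  also have "\<dots> = (\<Sum>j<N. if F i j then x $ i - x $ j else 0)"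
    unfolding deg sum_distrib_right sum_subtractf[symmetric] by (intro sum.cong) auto
  finally show ?thesis .
qed

lemma laplacian_quadratic_form:
  assumes G: "simple_graph N F" and x: "x \<in> carrier_vec N"
  shows "x \<bullet> (laplacian N F *\<^sub>v x) = (\<Sum>i<N. \<Sum>j<N. if F i j then (x $ i - x $ j)\<^sup>2 else 0) / 2"
proof -
  let ?L = "laplacian N F"
  have Lx: "?L *\<^sub>v x \<in> carrier_vec N" by (rule mult_mat_vec_carrier[OF laplacian_carrier x])
  have S: "x \<bullet> (?L *\<^sub>v x) = (\<Sum>i<N. \<Sum>j<N. if F i j then x $ i * (x $ i - x $ j) else 0)"
    using scalar_prod_eq_sum[OF Lx] laplacian_mult_vec_index[OF G x]
    by (simp add: sum_distrib_left if_distrib cong: if_cong)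
  also have "\<dots> = (\<Sum>j<N. \<Sum>i<N. if F i j then x $ i * (x $ i - x $ j) else 0)"
    by (rule sum.swap)
  also have "\<dots> = (\<Sum>i<N. \<Sum>j<N. if F i j then x $ j * (x $ j - x $ i) else 0)"
    by (intro sum.cong refl) (auto dest: simple_graphD(4)[OF G])
  finally have "2 * (x \<bullet> (?L *\<^sub>v x)) = (\<Sum>i<N. \<Sum>j<N. if F i j then x $ i * (x $ i - x $ j) else 0)
      + (\<Sum>i<N. \<Sum>j<N. if F i j then x $ j * (x $ j - x $ i) else 0)"
    using S by simp
  also have "\<dots> = (\<Sum>i<N. \<Sum>j<N. if F i j then (x $ i - x $ j)\<^sup>2 else 0)"
    unfolding sum.distrib[symmetric] by (intro sum.cong refl) (simp add: power2_eq_square algebra_simps)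
  finally show ?thesis by simp
qed

lemma laplacian_psd:
  assumes "simple_graph N F" "x \<in> carrier_vec N"
  shows "0 \<le> x \<bullet> (laplacian N F *\<^sub>v x)"
  unfolding laplacian_quadratic_form[OF assms] by (intro divide_nonneg_pos sum_nonneg) auto

lemma laplacian_kernel_edge:
  assumes G: "simple_graph N F" and x: "x \<in> carrier_vec N"
    and kernel: "laplacian N F *\<^sub>v x = 0\<^sub>v N" and e: "F i j"
  shows "x $ i = x $ j"
proof -
  have "(\<Sum>i<N. \<Sum>j<N. if F i j then (x $ i - x $ j)\<^sup>2 else 0) = 0"
    using laplacian_quadratic_form[OF G x] kernel x by simp
  then have "(if F i j then (x $ i - x $ j)\<^sup>2 else 0) = 0"
    using simple_graphD(1,2)[OF G e]
    by (subst (asm) sum_nonneg_eq_0_iff; simp add: sum_nonneg sum_nonneg_eq_0_iff)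
  then show ?thesis using e by simp
qed

lemma laplacian_kernel_connected:
  assumes G: "simple_graph N F" and C: "connected_graph N F" and x: "x \<in> carrier_vec N"
    and kernel: "laplacian N F *\<^sub>v x = 0\<^sub>v N" and "i < N" "j < N"
  shows "x $ i = x $ j"
proof -
  have "F\<^sup>*\<^sup>* i j" using C assms(5,6) unfolding connected_graph_def by blast
  then show ?thesis
    by (induction rule: rtranclp_induct) (simp_all add: laplacian_kernel_edge[OF G x kernel])
qed

lemma lambda2_pos:
  assumes G: "simple_graph N F" and C: "connected_graph N F" and N: "2 \<le> N"
  shows "0 < lambda2 N F"
  unfolding lambda2_def lap_eigenvalues_def
proof (rule symmetric_mat_second_eigenvalue_pos
    [OF laplacian_carrier symmetric_mat_laplacian[OF G] N laplacian_psd[OF G]])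
  fix x :: "real vec" assume x: "x \<in> carrier_vec N" and kernel: "laplacian N F *\<^sub>v x = 0\<^sub>v N"
  have "x = x $ 0 \<cdot>\<^sub>v vec N (\<lambda>_. 1)"
  proof (rule eq_vecI)
    fix i assume "i < dim_vec (x $ 0 \<cdot>\<^sub>v vec N (\<lambda>_. 1))"
    then have "i < N" by simp
    then show "x $ i = (x $ 0 \<cdot>\<^sub>v vec N (\<lambda>_. 1)) $ i"
      using laplacian_kernel_connected[OF G C x kernel, of i 0] N by simp
  qed (use x in simp)
  then show "\<exists>a. x = a \<cdot>\<^sub>v vec N (\<lambda>_. 1)" ..
qed

lemma laplacian_quadratic_form_cut:
  fixes S :: "nat set" and \<alpha> \<beta> :: real
  assumes G: "simple_graph N F" and pq: "p < N" "q < N"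
    and cut: "\<And>i j. F i j \<Longrightarrow> i \<in> S \<Longrightarrow> j \<notin> S \<Longrightarrow> i = p \<and> j = q"
  defines "x \<equiv> vec N (\<lambda>i. (if i \<in> S then \<alpha> else 0) + \<beta>)"
  shows "x \<bullet> (laplacian N F *\<^sub>v x) \<le> \<alpha>\<^sup>2"
proof -
  let ?e = "\<lambda>i j. (if i = p \<and> j = q then \<alpha>\<^sup>2 else 0) + (if i = q \<and> j = p then \<alpha>\<^sup>2 else 0)"
  have edge: "(if F i j then (x $ i - x $ j)\<^sup>2 else 0) \<le> ?e i j" if "i < N" "j < N" for i j
    using that cut[of i j] cut[of j i] simple_graphD(4)[OF G, of i j] unfolding x_def
    by (cases "F i j"; cases "i \<in> S"; cases "j \<in> S") (auto simp: power2_eq_square)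
  have delta: "(\<Sum>i<N. \<Sum>j<N. if i = r \<and> j = s then \<alpha>\<^sup>2 else 0) = \<alpha>\<^sup>2"
    if "r < N" "s < N" for r s
  proof -
    have "(\<Sum>j<N. if i = r \<and> j = s then \<alpha>\<^sup>2 else 0) = (if i = r then \<alpha>\<^sup>2 else 0)" for i
      using that by (cases "i = r") simp_all
    then show ?thesis using that by simp
  qed
  have "(\<Sum>i<N. \<Sum>j<N. if F i j then (x $ i - x $ j)\<^sup>2 else 0) \<le> (\<Sum>i<N. \<Sum>j<N. ?e i j)"
    using edge by (intro sum_mono) auto
  also have "\<dots> = 2 * \<alpha>\<^sup>2"
    using delta[OF pq] delta[OF pq(2,1)] by (simp add: sum.distrib)
  finally have "(\<Sum>i<N. \<Sum>j<N. if F i j then (x $ i - x $ j)\<^sup>2 else 0) \<le> 2 * \<alpha>\<^sup>2" .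
  moreover have x: "x \<in> carrier_vec N" unfolding x_def by simp
  ultimately show ?thesis
    unfolding laplacian_quadratic_form[OF G x] by simp
qed

lemma cut_vector_norm_ge:
  fixes S :: "nat set" and \<alpha> \<beta> :: real
  assumes "p \<in> S" "p < N" "q \<notin> S" "q < N"
  defines "x \<equiv> vec N (\<lambda>i. (if i \<in> S then \<alpha> else 0) + \<beta>)"
  shows "(\<alpha> + \<beta>)\<^sup>2 + \<beta>\<^sup>2 \<le> x \<bullet> x"
proof -
  have "x $ p = \<alpha> + \<beta>" "x $ q = \<beta>" "p \<noteq> q"
    using assms unfolding x_def by auto
  then have "(\<alpha> + \<beta>)\<^sup>2 + \<beta>\<^sup>2 = (\<Sum>i\<in>{p, q}. (x $ i)\<^sup>2)" by simp
  also have "\<dots> \<le> (\<Sum>i<N. (x $ i)\<^sup>2)"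
    using assms(2,4) by (intro sum_mono2) auto
  also have "\<dots> = x \<bullet> x"
    unfolding x_def by (simp add: scalar_prod_eq_sum[of _ N] power2_eq_square)
  finally show ?thesis .
qed

lemma exists_orthogonal_cut_vector:
  fixes S :: "nat set" and u :: "real vec"
  assumes u: "u \<in> carrier_vec N"
  obtains \<alpha> \<beta> :: real where "\<alpha> \<noteq> 0 \<or> \<beta> \<noteq> 0"
    and "u \<bullet> vec N (\<lambda>i. (if i \<in> S then \<alpha> else 0) + \<beta>) = 0"
proof -
  define s1 where "s1 = (\<Sum>i<N. if i \<in> S then u $ i else 0)"
  define s2 where "s2 = (\<Sum>i<N. u $ i)"
  have "u \<bullet> vec N (\<lambda>i. (if i \<in> S then \<alpha> else 0) + \<beta>) = \<alpha> * s1 + \<beta> * s2" for \<alpha> \<beta>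
  proof -
    have "u \<bullet> vec N (\<lambda>i. (if i \<in> S then \<alpha> else 0) + \<beta>)
        = (\<Sum>i<N. \<alpha> * (if i \<in> S then u $ i else 0) + \<beta> * u $ i)"
      by (auto simp: scalar_prod_eq_sum[of _ N] algebra_simps intro!: sum.cong)
    then show ?thesis unfolding s1_def s2_def by (simp add: sum.distrib sum_distrib_left)
  qed
  moreover have "\<exists>\<alpha> \<beta>. (\<alpha> \<noteq> 0 \<or> \<beta> \<noteq> 0) \<and> \<alpha> * s1 + \<beta> * s2 = 0"
  proof (cases "s1 = 0")
    case True
    then show ?thesis by (intro exI[of _ 1] exI[of _ 0]) simp
  next
    case False
    then show ?thesis by (intro exI[of _ s2] exI[of _ "- s1"]) (simp add: mult.commute)
  qed
  ultimately show ?thesis using that by metis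
qed

lemma lambda2_le_two:
  assumes G: "simple_graph N F" and "p \<in> S" "p < N" "q \<notin> S" "q < N"
    and cut: "\<And>i j. F i j \<Longrightarrow> i \<in> S \<Longrightarrow> j \<notin> S \<Longrightarrow> i = p \<and> j = q"
  shows "lambda2 N F \<le> 2"
  unfolding lambda2_def lap_eigenvalues_def
proof (rule symmetric_mat_second_eigenvalue_le[OF laplacian_carrier symmetric_mat_laplacian[OF G]])
  show "2 \<le> N" using assms(2-5) by (cases "p = q") auto
  fix u :: "real vec" assume u: "u \<in> carrier_vec N"
  obtain \<alpha> \<beta> where ab: "\<alpha> \<noteq> 0 \<or> \<beta> \<noteq> 0"
    and orth: "u \<bullet> vec N (\<lambda>i. (if i \<in> S then \<alpha> else 0) + \<beta>) = 0"
    using exists_orthogonal_cut_vector[OF u] .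
  define x where "x = vec N (\<lambda>i. (if i \<in> S then \<alpha> else 0) + \<beta>)"
  have x: "x \<in> carrier_vec N" unfolding x_def by simp
  have xx: "(\<alpha> + \<beta>)\<^sup>2 + \<beta>\<^sup>2 \<le> x \<bullet> x"
    unfolding x_def by (rule cut_vector_norm_ge[OF assms(2-5)])
  have "x \<bullet> (laplacian N F *\<^sub>v x) \<le> \<alpha>\<^sup>2"
    unfolding x_def by (rule laplacian_quadratic_form_cut[OF G assms(3,5) cut])
  also have "\<dots> \<le> 2 * ((\<alpha> + \<beta>)\<^sup>2 + \<beta>\<^sup>2)"
    using zero_le_power2[of "\<alpha> + 2 * \<beta>"] by (simp add: power2_eq_square algebra_simps)
  also have "\<dots> \<le> 2 * (x \<bullet> x)"
    using xx by simp
  finally have "x \<bullet> (laplacian N F *\<^sub>v x) \<le> 2 * (x \<bullet> x)" .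
  moreover have "x \<noteq> 0\<^sub>v N"
  proof
    assume "x = 0\<^sub>v N"
    then have "x \<bullet> x = 0" by simp
    moreover have "0 < (\<alpha> + \<beta>)\<^sup>2 + \<beta>\<^sup>2"
      using ab(1) by (auto simp: sum_power2_gt_zero_iff)
    ultimately show False using xx by linarith
  qed
  ultimately show "\<exists>x\<in>carrier_vec N. x \<noteq> 0\<^sub>v N \<and> u \<bullet> x = 0 \<and> x \<bullet> (laplacian N F *\<^sub>v x) \<le> 2 * (x \<bullet> x)"
    using x orth unfolding x_def by blast
qed

section \<open>Chains of copies of a graph\<close>

locale graph_chain =
  fixes n l :: nat and E :: "nat \<Rightarrow> nat \<Rightarrow> bool" and a b :: "nat \<Rightarrow> nat"
  assumes simple: "simple_graph n E"
    and link_ends: "\<And>i. Suc i < l \<Longrightarrow> a i < n \<and> b i < n"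
begin

abbreviation B :: "nat \<Rightarrow> nat \<Rightarrow> bool" where
  "B \<equiv> chain_graph n E l a b"

lemma copy_vertex_less: "c < l \<Longrightarrow> v < n \<Longrightarrow> c * n + v < l * n"
proof -
  assume "c < l" "v < n"
  then have "c * n + v < Suc c * n" by simp
  also have "\<dots> \<le> l * n" using \<open>c < l\<close> by (intro mult_le_mono1) simp
  finally show ?thesis .
qed

lemma chain_graph_copy_edge:
  assumes "c < l" "E y z"
  shows "B (c * n + y) (c * n + z)"
  using assms simple_graphD[OF simple assms(2)] copy_vertex_less[OF assms(1)]
  unfolding chain_graph_def by simp

lemma chain_graph_link_edge:
  assumes "Suc c < l"
  shows "B (c * n + a c) (Suc c * n + b c)"
  using assms link_ends[OF assms] copy_vertex_less[of c "a c"] copy_vertex_less[of "Suc c" "b c"]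
  unfolding chain_graph_def by auto

lemma simple_graph_chain_graph: "simple_graph (l * n) B"
  unfolding simple_graph_def
proof (intro allI impI conjI)
  fix x y assume e: "B x y"
  then show "x < l * n" "y < l * n" unfolding chain_graph_def by auto
  show "B y x"
    using e simple_graphD(4)[OF simple] unfolding chain_graph_def by fastforce
  show "x \<noteq> y"
  proof
    assume "x = y"
    then consider "E (x mod n) (x mod n)" | i where "Suc i < l" "x = i * n + a i" "x = Suc i * n + b i"
      using e unfolding chain_graph_def by auto
    then show False
    proof cases
      case 1
      then show False using simple_graphD(3)[OF simple] by blast
    next
      case (2 i)
      then show False using link_ends[OF 2(1)] by simp
    qed
  qed
qed

lemma chain_graph_lift_walk:
  assumes "E\<^sup>*\<^sup>* y z" "c < l"
  shows "B\<^sup>*\<^sup>* (c * n + y) (c * n + z)"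
  using assms(1)
proof (induction rule: rtranclp_induct)
  case (step z w)
  then show ?case using chain_graph_copy_edge[OF assms(2) step(2)] by simp
qed simp

lemma connected_graph_chain_graph:
  assumes C: "connected_graph n E" and "0 < l"
  shows "connected_graph (l * n) B"
proof -
  have walk: "E\<^sup>*\<^sup>* y z" if "y < n" "z < n" for y z
    using C that unfolding connected_graph_def by blast
  have n: "0 < n" using C unfolding connected_graph_def by simp
  have from_0: "B\<^sup>*\<^sup>* 0 (c * n + v)" if "c < l" "v < n" for c v
    using that
  proof (induction c arbitrary: v)
    case 0
    then show ?case using chain_graph_lift_walk[OF walk[OF n 0(2)] 0(1)] by simp
  next
    case (Suc c)
    note ends = link_ends[OF Suc.prems(1)]
    have "B\<^sup>*\<^sup>* 0 (c * n + a c)" using Suc.IH[of "a c"] Suc.prems(1) ends by simp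
    also have "B (c * n + a c) (Suc c * n + b c)" by (rule chain_graph_link_edge[OF Suc.prems(1)])
    also have "B\<^sup>*\<^sup>* (Suc c * n + b c) (Suc c * n + v)"
      by (rule chain_graph_lift_walk[OF walk[OF ends[THEN conjunct2] Suc.prems(2)] Suc.prems(1)])
    finally show ?case .
  qed
  have "B\<^sup>*\<^sup>* 0 x" if "x < l * n" for x
    using from_0[of "x div n" "x mod n"] that n by (simp add: less_mult_imp_div_less)
  moreover have "symp B\<^sup>*\<^sup>*"
    using simple_graph_chain_graph by (intro symp_rtranclp sympI) (simp add: simple_graph_def)
  ultimately have "B\<^sup>*\<^sup>* x y" if "x < l * n" "y < l * n" for x y
    using that by (meson rtranclp_trans sympD)
  then show ?thesis
    using n \<open>0 < l\<close> unfolding connected_graph_def by simp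
qed

lemma chain_graph_leave_first_copy:
  assumes e: "B i j" and "i < n" "\<not> j < n"
  shows "i = a 0 \<and> j = n + b 0"
proof -
  have "j div n \<noteq> i div n" using assms(2,3) by (simp add: div_eq_0_iff)
  then obtain k where k: "Suc k < l"
    and link: "(i = k * n + a k \<and> j = Suc k * n + b k) \<or> (j = k * n + a k \<and> i = Suc k * n + b k)"
    using e unfolding chain_graph_def by auto
  have "k = 0"
  proof (rule ccontr)
    assume "k \<noteq> 0"
    then have "n \<le> k * n" by simp
    moreover have "k * n \<le> i" using link by auto
    ultimately show False using assms(2) by linarith
  qed
  then show ?thesis using link assms(2) by auto
qed

end

theorem theorem6p4:
  fixes n l :: nat and E :: "nat \<Rightarrow> nat \<Rightarrow> bool" and a b :: "nat \<Rightarrow> nat"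
  assumes "simple_graph n E"
    and "connected_graph n E"
    and "l \<ge> 2"
    and "\<And>i. Suc i < l \<Longrightarrow> a i < n \<and> b i < n"
  shows "0 < lambda2 (l * n) (chain_graph n E l a b) \<and> lambda2 (l * n) (chain_graph n E l a b) \<le> 2"
proof
  interpret graph_chain n l E a b
    using assms(1,4) by unfold_locales
  have n: "0 < n" using assms(2) unfolding connected_graph_def by simp
  have "2 * n \<le> l * n" using assms(3) by simp
  then have "2 \<le> l * n" using n by linarith
  moreover have "0 < l" using assms(3) by simp
  ultimately show "0 < lambda2 (l * n) B"
    using lambda2_pos[OF simple_graph_chain_graph connected_graph_chain_graph[OF assms(2)]] by blast
  have ends: "a 0 < n" "b 0 < n" using link_ends[of 0] assms(3) by auto
  have "n + b 0 < l * n" using copy_vertex_less[of 1 "b 0"] ends(2) assms(3) by simp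
  show "lambda2 (l * n) B \<le> 2"
  proof (rule lambda2_le_two[OF simple_graph_chain_graph, of "a 0" "{..<n}" "n + b 0"])
    show "a 0 \<in> {..<n}" "n + b 0 \<notin> {..<n}" using ends(1) by simp_all
    show "n + b 0 < l * n" by fact
    show "a 0 < l * n" using ends(1) \<open>n + b 0 < l * n\<close> by linarith
    show "i = a 0 \<and> j = n + b 0" if "B i j" "i \<in> {..<n}" "j \<notin> {..<n}" for i j
      using chain_graph_leave_first_copy that by simp
  qed
qed

end
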